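(* A permutation group $G$ on a finite set $\Omega$ with $|\Omega|\ge 2$ has the ordered $2$-ut property if and only if $G$ is primitive.
   Context: $G$ has the ordered $k$-ut property if for every $k$-tuple $(a_1,\dots,a_k)$ of distinct points of $\Omega$ and every ordered partition $(P_1,\dots,P_k)$ of $\Omega$ into $k$ nonempty parts there is $g\in G$ with $a_ig\in P_i$ for all $i$. *)

theory Defs
  imports "HOL-Combinatorics.Permutations"
begin

text \<open>Points are acted on by function application: a g is written g a.\<close>

definition perm_group_on :: "'a set \<Rightarrow> ('a \<Rightarrow> 'a) set \<Rightarrow> bool" where
  "perm_group_on \<Omega> G \<longleftrightarrow>
     (\<forall>g\<in>G. g permutes \<Omega>) \<and> id \<in> G \<and>
     (\<forall>g\<in>G. \<forall>h\<in>G. g \<circ> h \<in> G) \<and> (\<forall>g\<in>G. inv g \<in> G)"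

definition transitive_on :: "'a set \<Rightarrow> ('a \<Rightarrow> 'a) set \<Rightarrow> bool" where
  "transitive_on \<Omega> G \<longleftrightarrow> \<Omega> \<noteq> {} \<and> (\<forall>x\<in>\<Omega>. \<forall>y\<in>\<Omega>. \<exists>g\<in>G. g x = y)"

definition is_block :: "'a set \<Rightarrow> ('a \<Rightarrow> 'a) set \<Rightarrow> 'a set \<Rightarrow> bool" where
  "is_block \<Omega> G B \<longleftrightarrow> B \<noteq> {} \<and> B \<subseteq> \<Omega> \<and> (\<forall>g\<in>G. g ` B = B \<or> g ` B \<inter> B = {})"

definition primitive_on :: "'a set \<Rightarrow> ('a \<Rightarrow> 'a) set \<Rightarrow> bool" where
  "primitive_on \<Omega> G \<longleftrightarrow> transitive_on \<Omega> G \<and>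
     (\<forall>B. is_block \<Omega> G B \<longrightarrow> card B = 1 \<or> B = \<Omega>)"

text \<open>Ordered partition (P_1,...,P_k) of \<Omega> into k nonempty parts, indexed by 0..k-1.\<close>
definition ordered_partition :: "'a set \<Rightarrow> nat \<Rightarrow> (nat \<Rightarrow> 'a set) \<Rightarrow> bool" where
  "ordered_partition \<Omega> k P \<longleftrightarrow>
     (\<forall>i<k. P i \<noteq> {}) \<and> (\<forall>i<k. \<forall>j<k. i \<noteq> j \<longrightarrow> P i \<inter> P j = {}) \<and>
     (\<Union>i<k. P i) = \<Omega>"

definition ordered_ut :: "nat \<Rightarrow> 'a set \<Rightarrow> ('a \<Rightarrow> 'a) set \<Rightarrow> bool" where
  "ordered_ut k \<Omega> G \<longleftrightarrow>
     (\<forall>a P. a ` {..<k} \<subseteq> \<Omega> \<and> inj_on a {..<k} \<and> ordered_partition \<Omega> k P \<longrightarrow>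
        (\<exists>g\<in>G. \<forall>i<k. g (a i) \<in> P i))"

end

theory Submission
  imports Defs
begin

text \<open>If the ordered 2-ut property holds, a nontrivial block containing two points x, y
is impossible: some g sends x into the block and y out of it. Conversely, if some pair
(a, b) cannot be separated by a set P, i.e. g a \<in> P always forces g b \<in> P, then P contains
a whole connected component of the orbital graph of (a, b). G maps components into
components, and transitivity makes them all equally large, so on a finite set G permutes
the components: they are blocks of size at least 2, and P \<noteq> \<Omega> contradicts primitivity.\<close>

lemma perm_group_on_permutes: "perm_group_on \<Omega> G \<Longrightarrow> g \<in> G \<Longrightarrow> g permutes \<Omega>"
  unfolding perm_group_on_def by blast

lemma perm_group_on_comp: "perm_group_on \<Omega> G \<Longrightarrow> g \<in> G \<Longrightarrow> h \<in> G \<Longrightarrow> g \<circ> h \<in> G"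
  unfolding perm_group_on_def by blast

lemma perm_group_on_id: "perm_group_on \<Omega> G \<Longrightarrow> id \<in> G"
  unfolding perm_group_on_def by blast

lemma perm_group_on_closed: "perm_group_on \<Omega> G \<Longrightarrow> g \<in> G \<Longrightarrow> x \<in> \<Omega> \<Longrightarrow> g x \<in> \<Omega>"
  by (simp add: perm_group_on_permutes permutes_in_image)

lemma primitive_on_block: "primitive_on \<Omega> G \<Longrightarrow> is_block \<Omega> G B \<Longrightarrow> card B = 1 \<or> B = \<Omega>"
  unfolding primitive_on_def by blast

lemma transitive_onD: "transitive_on \<Omega> G \<Longrightarrow> x \<in> \<Omega> \<Longrightarrow> y \<in> \<Omega> \<Longrightarrow> \<exists>g\<in>G. g x = y"
  unfolding transitive_on_def by blast

definition orbital :: "('a \<Rightarrow> 'a) set \<Rightarrow> 'a \<Rightarrow> 'a \<Rightarrow> ('a \<times> 'a) set" where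
  "orbital G a b = {(g a, g b) | g. g \<in> G}"

lemma orbital_rtrancl_closed:
  assumes "perm_group_on \<Omega> G" "g \<in> G" "(u, v) \<in> (orbital G a b)\<^sup>*"
  shows "(g u, g v) \<in> (orbital G a b)\<^sup>*"
  using assms(3)
proof (induction rule: rtrancl_induct)
  case (step y z)
  then obtain h where h: "h \<in> G" "y = h a" "z = h b"
    unfolding orbital_def by blast
  have "((g \<circ> h) a, (g \<circ> h) b) \<in> orbital G a b"
    using perm_group_on_comp[OF assms(1,2) h(1)] unfolding orbital_def by blast
  then have "(g y, g z) \<in> orbital G a b" using h by simp
  with step.IH show ?case by (rule rtrancl_into_rtrancl)
qed simp

lemma orbital_component_subset:
  assumes "perm_group_on \<Omega> G" "b \<in> \<Omega>" "x \<in> \<Omega>"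
  shows "(orbital G a b)\<^sup>* `` {x} \<subseteq> \<Omega>"
proof
  fix y assume "y \<in> (orbital G a b)\<^sup>* `` {x}"
  then have "(x, y) \<in> (orbital G a b)\<^sup>*" by simp
  then show "y \<in> \<Omega>"
    by (induction rule: rtrancl_induct)
      (auto simp: orbital_def intro: perm_group_on_closed[OF assms(1)] assms(2,3))
qed

lemma finite_orbital_component:
  "finite \<Omega> \<Longrightarrow> perm_group_on \<Omega> G \<Longrightarrow> b \<in> \<Omega> \<Longrightarrow> x \<in> \<Omega> \<Longrightarrow> finite ((orbital G a b)\<^sup>* `` {x})"
  using orbital_component_subset finite_subset by metis

lemma image_orbital_component_subset:
  assumes "perm_group_on \<Omega> G" "g \<in> G"
  shows "g ` ((orbital G a b)\<^sup>* `` {x}) \<subseteq> (orbital G a b)\<^sup>* `` {g x}"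
  using orbital_rtrancl_closed[OF assms] by blast

lemma card_image_orbital_component:
  assumes "perm_group_on \<Omega> G" "g \<in> G"
  shows "card (g ` ((orbital G a b)\<^sup>* `` {x})) = card ((orbital G a b)\<^sup>* `` {x})"
proof (rule card_image)
  show "inj_on g ((orbital G a b)\<^sup>* `` {x})"
    using permutes_inj[OF perm_group_on_permutes[OF assms]] by (rule inj_on_subset) simp
qed

lemma card_orbital_component_eq:
  assumes fin: "finite \<Omega>" and pg: "perm_group_on \<Omega> G" and tr: "transitive_on \<Omega> G"
    and "b \<in> \<Omega>" "x \<in> \<Omega>" "y \<in> \<Omega>"
  shows "card ((orbital G a b)\<^sup>* `` {x}) = card ((orbital G a b)\<^sup>* `` {y})"
proof -
  let ?C = "\<lambda>x. (orbital G a b)\<^sup>* `` {x}"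
  have card_le: "card (?C x) \<le> card (?C y)" if xy: "x \<in> \<Omega>" "y \<in> \<Omega>" for x y
  proof -
    obtain g where g: "g \<in> G" "g x = y"
      using transitive_onD[OF tr xy] by blast
    have "card (?C x) = card (g ` ?C x)"
      using card_image_orbital_component[OF pg g(1)] by simp
    also have "\<dots> \<le> card (?C y)"
    proof (rule card_mono)
      show "finite (?C y)" using finite_orbital_component[OF fin pg \<open>b \<in> \<Omega>\<close> \<open>y \<in> \<Omega>\<close>] .
      show "g ` ?C x \<subseteq> ?C y" using image_orbital_component_subset[OF pg g(1), of a b x] by (simp add: g(2))
    qed
    finally show ?thesis .
  qed
  show ?thesis using card_le[OF assms(5,6)] card_le[OF assms(6,5)] by (rule le_antisym)
qed

lemma orbital_component_eq:
  assumes fin: "finite \<Omega>" and pg: "perm_group_on \<Omega> G" and tr: "transitive_on \<Omega> G"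
    and "b \<in> \<Omega>" "x \<in> \<Omega>" "y \<in> (orbital G a b)\<^sup>* `` {x}"
  shows "(orbital G a b)\<^sup>* `` {y} = (orbital G a b)\<^sup>* `` {x}"
proof (rule card_subset_eq)
  show "finite ((orbital G a b)\<^sup>* `` {x})"
    using finite_orbital_component[OF fin pg \<open>b \<in> \<Omega>\<close> \<open>x \<in> \<Omega>\<close>] .
  have "(x, y) \<in> (orbital G a b)\<^sup>*" using assms(6) by simp
  then show "(orbital G a b)\<^sup>* `` {y} \<subseteq> (orbital G a b)\<^sup>* `` {x}"
    using rtrancl_trans by fastforce
  have "y \<in> \<Omega>" using orbital_component_subset[OF pg \<open>b \<in> \<Omega>\<close> \<open>x \<in> \<Omega>\<close>] assms(6) by blast
  then show "card ((orbital G a b)\<^sup>* `` {y}) = card ((orbital G a b)\<^sup>* `` {x})"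
    by (rule card_orbital_component_eq[OF fin pg tr \<open>b \<in> \<Omega>\<close> _ \<open>x \<in> \<Omega>\<close>])
qed

lemma image_orbital_component:
  assumes fin: "finite \<Omega>" and pg: "perm_group_on \<Omega> G" and tr: "transitive_on \<Omega> G"
    and "b \<in> \<Omega>" "x \<in> \<Omega>" "g \<in> G"
  shows "g ` ((orbital G a b)\<^sup>* `` {x}) = (orbital G a b)\<^sup>* `` {g x}"
proof (rule card_subset_eq)
  have "g x \<in> \<Omega>" using perm_group_on_closed[OF pg \<open>g \<in> G\<close> \<open>x \<in> \<Omega>\<close>] .
  then show "finite ((orbital G a b)\<^sup>* `` {g x})"
    using finite_orbital_component[OF fin pg \<open>b \<in> \<Omega>\<close>] by blast
  show "g ` ((orbital G a b)\<^sup>* `` {x}) \<subseteq> (orbital G a b)\<^sup>* `` {g x}"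
    using image_orbital_component_subset[OF pg \<open>g \<in> G\<close>] .
  show "card (g ` ((orbital G a b)\<^sup>* `` {x})) = card ((orbital G a b)\<^sup>* `` {g x})"
    using card_image_orbital_component[OF pg \<open>g \<in> G\<close>]
      card_orbital_component_eq[OF fin pg tr \<open>b \<in> \<Omega>\<close> \<open>x \<in> \<Omega>\<close> \<open>g x \<in> \<Omega>\<close>] by simp
qed

lemma orbital_component_is_block:
  assumes fin: "finite \<Omega>" and pg: "perm_group_on \<Omega> G" and tr: "transitive_on \<Omega> G"
    and "b \<in> \<Omega>" "x \<in> \<Omega>"
  shows "is_block \<Omega> G ((orbital G a b)\<^sup>* `` {x})"
  unfolding is_block_def
proof (intro conjI ballI)
  let ?C = "\<lambda>x. (orbital G a b)\<^sup>* `` {x}"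
  show "?C x \<noteq> {}" by blast
  show "?C x \<subseteq> \<Omega>" using orbital_component_subset[OF pg \<open>b \<in> \<Omega>\<close> \<open>x \<in> \<Omega>\<close>] .
  fix g assume "g \<in> G"
  have image: "g ` ?C x = ?C (g x)" using image_orbital_component[OF assms \<open>g \<in> G\<close>] .
  show "g ` ?C x = ?C x \<or> g ` ?C x \<inter> ?C x = {}"
  proof (cases "g ` ?C x \<inter> ?C x = {}")
    case False
    then obtain z where z: "z \<in> ?C (g x)" "z \<in> ?C x" using image by auto
    have "g x \<in> \<Omega>" using perm_group_on_closed[OF pg \<open>g \<in> G\<close> \<open>x \<in> \<Omega>\<close>] .
    then have "?C (g x) = ?C z" using orbital_component_eq[OF fin pg tr \<open>b \<in> \<Omega>\<close> _ z(1)] by simp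
    also have "\<dots> = ?C x" using orbital_component_eq[OF fin pg tr \<open>b \<in> \<Omega>\<close> \<open>x \<in> \<Omega>\<close> z(2)] .
    finally show ?thesis using image by simp
  qed simp
qed

lemma orbital_component_subset_closed:
  assumes "\<forall>g\<in>G. g a \<in> P \<longrightarrow> g b \<in> P" "x \<in> P"
  shows "(orbital G a b)\<^sup>* `` {x} \<subseteq> P"
proof
  fix y assume "y \<in> (orbital G a b)\<^sup>* `` {x}"
  then have "(x, y) \<in> (orbital G a b)\<^sup>*" by simp
  then show "y \<in> P"
    by (induction rule: rtrancl_induct) (use assms in \<open>auto simp: orbital_def\<close>)
qed

text \<open>The ordered 2-ut property, with the partition (B, \<Omega> - B) described by its first part.\<close>
definition separates_pairs :: "'a set \<Rightarrow> ('a \<Rightarrow> 'a) set \<Rightarrow> bool" where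
  "separates_pairs \<Omega> G \<longleftrightarrow>
     (\<forall>x\<in>\<Omega>. \<forall>y\<in>\<Omega>. x \<noteq> y \<longrightarrow>
        (\<forall>B. B \<subseteq> \<Omega> \<and> B \<noteq> {} \<and> B \<noteq> \<Omega> \<longrightarrow> (\<exists>g\<in>G. g x \<in> B \<and> g y \<notin> B)))"

lemma ordered_partition_2_iff:
  "ordered_partition \<Omega> 2 P \<longleftrightarrow> P 0 \<noteq> {} \<and> P 1 \<noteq> {} \<and> P 0 \<inter> P 1 = {} \<and> P 0 \<union> P 1 = \<Omega>"
proof -
  have two: "{..<2::nat} = {0, 1}" by auto
  show ?thesis
    unfolding ordered_partition_def two by (auto simp: less_2_cases_iff)
qed

lemma ordered_ut_2_iff:
  fixes \<Omega> :: "'a set"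
  shows "ordered_ut 2 \<Omega> G \<longleftrightarrow>
     (\<forall>(a :: nat \<Rightarrow> 'a) P. a 0 \<in> \<Omega> \<and> a 1 \<in> \<Omega> \<and> a 0 \<noteq> a 1 \<and> ordered_partition \<Omega> 2 P \<longrightarrow>
        (\<exists>g\<in>G. g (a 0) \<in> P 0 \<and> g (a 1) \<in> P 1))"
proof -
  have two: "{..<2::nat} = {0, 1}" by auto
  have image: "a ` {..<2} \<subseteq> \<Omega> \<longleftrightarrow> a 0 \<in> \<Omega> \<and> a 1 \<in> \<Omega>" for a :: "nat \<Rightarrow> 'a"
    unfolding two by simp
  have inj: "inj_on a {..<2} \<longleftrightarrow> a 0 \<noteq> a 1" for a :: "nat \<Rightarrow> 'a"
    unfolding two by auto
  have images: "(\<forall>i<2. g (a i) \<in> P i) \<longleftrightarrow> g (a 0) \<in> P 0 \<and> g (a 1) \<in> P 1"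
    for g :: "'a \<Rightarrow> 'a" and a :: "nat \<Rightarrow> 'a" and P :: "nat \<Rightarrow> 'a set"
    by (auto simp: less_2_cases_iff)
  show ?thesis
    unfolding ordered_ut_def by (simp only: image inj images conj_assoc)
qed

lemma separates_pairs_if_ordered_ut_2:
  assumes ut: "ordered_ut 2 \<Omega> G"
  shows "separates_pairs \<Omega> G"
  unfolding separates_pairs_def
proof (intro ballI allI impI)
  fix x y B assume "x \<in> \<Omega>" "y \<in> \<Omega>" "x \<noteq> y" "B \<subseteq> \<Omega> \<and> B \<noteq> {} \<and> B \<noteq> \<Omega>"
  define a :: "nat \<Rightarrow> 'a" where "a i = (if i = 0 then x else y)" for i
  define P where "P i = (if i = 0 then B else \<Omega> - B)" for i :: nat
  have "ordered_partition \<Omega> 2 P"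
    unfolding ordered_partition_2_iff P_def using \<open>B \<subseteq> \<Omega> \<and> _\<close> by auto
  moreover have "a 0 \<in> \<Omega>" "a 1 \<in> \<Omega>" "a 0 \<noteq> a 1"
    unfolding a_def using \<open>x \<in> \<Omega>\<close> \<open>y \<in> \<Omega>\<close> \<open>x \<noteq> y\<close> by simp_all
  ultimately obtain g where "g \<in> G" "g (a 0) \<in> P 0" "g (a 1) \<in> P 1"
    using ut unfolding ordered_ut_2_iff by blast
  then show "\<exists>g\<in>G. g x \<in> B \<and> g y \<notin> B"
    unfolding a_def P_def by auto
qed

lemma ordered_ut_2_if_separates_pairs:
  assumes pg: "perm_group_on \<Omega> G" and sep: "separates_pairs \<Omega> G"
  shows "ordered_ut 2 \<Omega> G"
  unfolding ordered_ut_2_iff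
proof (intro allI impI)
  fix a :: "nat \<Rightarrow> 'a" and P
  assume "a 0 \<in> \<Omega> \<and> a 1 \<in> \<Omega> \<and> a 0 \<noteq> a 1 \<and> ordered_partition \<Omega> 2 P"
  then have a: "a 0 \<in> \<Omega>" "a 1 \<in> \<Omega>" "a 0 \<noteq> a 1"
    and P: "P 0 \<noteq> {}" "P 1 \<noteq> {}" "P 0 \<inter> P 1 = {}" "P 0 \<union> P 1 = \<Omega>"
    unfolding ordered_partition_2_iff by auto
  have "P 0 \<subseteq> \<Omega> \<and> P 0 \<noteq> {} \<and> P 0 \<noteq> \<Omega>" using P by blast
  then obtain g where "g \<in> G" "g (a 0) \<in> P 0" "g (a 1) \<notin> P 0"
    using sep a unfolding separates_pairs_def by blast
  moreover have "g (a 1) \<in> \<Omega>" using perm_group_on_closed[OF pg \<open>g \<in> G\<close> a(2)] .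
  ultimately show "\<exists>g\<in>G. g (a 0) \<in> P 0 \<and> g (a 1) \<in> P 1" using P(4) by blast
qed

lemma transitive_if_separates_pairs:
  assumes "card \<Omega> \<ge> 2" and sep: "separates_pairs \<Omega> G"
  shows "transitive_on \<Omega> G"
  unfolding transitive_on_def
proof (intro conjI ballI)
  have other: "\<exists>z\<in>\<Omega>. z \<noteq> x" for x
  proof (rule ccontr)
    assume "\<not> (\<exists>z\<in>\<Omega>. z \<noteq> x)"
    then have "\<Omega> \<subseteq> {x}" by blast
    then have "card \<Omega> \<le> 1" using card_mono[of "{x}" \<Omega>] by simp
    with \<open>card \<Omega> \<ge> 2\<close> show False by simp
  qed
  show "\<Omega> \<noteq> {}" using \<open>card \<Omega> \<ge> 2\<close> by auto
  fix x y assume "x \<in> \<Omega>" "y \<in> \<Omega>"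
  obtain z where "z \<in> \<Omega>" "x \<noteq> z" using other[of x] by metis
  moreover have "{y} \<subseteq> \<Omega> \<and> {y} \<noteq> {} \<and> {y} \<noteq> \<Omega>" using other[of y] \<open>y \<in> \<Omega>\<close> by blast
  ultimately have "\<exists>g\<in>G. g x \<in> {y} \<and> g z \<notin> {y}"
    using sep \<open>x \<in> \<Omega>\<close> unfolding separates_pairs_def by blast
  then show "\<exists>g\<in>G. g x = y" by blast
qed

lemma primitive_if_separates_pairs:
  assumes "perm_group_on \<Omega> G" "finite \<Omega>" "card \<Omega> \<ge> 2" and sep: "separates_pairs \<Omega> G"
  shows "primitive_on \<Omega> G"
  unfolding primitive_on_def
proof (intro conjI allI impI)
  show "transitive_on \<Omega> G" using transitive_if_separates_pairs[OF assms(3) sep] .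
  fix B assume B: "is_block \<Omega> G B"
  show "card B = 1 \<or> B = \<Omega>"
  proof (rule ccontr)
    assume nontrivial: "\<not> (card B = 1 \<or> B = \<Omega>)"
    have "B \<subseteq> \<Omega>" "B \<noteq> {}" using B unfolding is_block_def by auto
    with \<open>finite \<Omega>\<close> nontrivial obtain x y where "x \<in> B" "y \<in> B" "x \<noteq> y"
      by (metis finite_subset is_singletonI' is_singleton_altdef)
    then obtain g where "g \<in> G" "g x \<in> B" "g y \<notin> B"
      using sep nontrivial \<open>B \<subseteq> \<Omega>\<close> \<open>B \<noteq> {}\<close> unfolding separates_pairs_def by blast
    then have "g ` B \<inter> B \<noteq> {}" "g ` B \<noteq> B" using \<open>x \<in> B\<close> \<open>y \<in> B\<close> by auto
    then show False using B \<open>g \<in> G\<close> unfolding is_block_def by blast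
  qed
qed

lemma separates_pairs_if_primitive:
  assumes fin: "finite \<Omega>" and pg: "perm_group_on \<Omega> G" and pr: "primitive_on \<Omega> G"
  shows "separates_pairs \<Omega> G"
  unfolding separates_pairs_def
proof (intro ballI allI impI)
  fix a b B assume "a \<in> \<Omega>" "b \<in> \<Omega>" "a \<noteq> b" and B: "B \<subseteq> \<Omega> \<and> B \<noteq> {} \<and> B \<noteq> \<Omega>"
  show "\<exists>g\<in>G. g a \<in> B \<and> g b \<notin> B"
  proof (rule ccontr)
    assume "\<not> ?thesis"
    then have closed: "\<forall>g\<in>G. g a \<in> B \<longrightarrow> g b \<in> B" by blast
    let ?C = "\<lambda>x. (orbital G a b)\<^sup>* `` {x}"
    have tr: "transitive_on \<Omega> G" using pr unfolding primitive_on_def by blast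
    obtain x where "x \<in> B" using B by blast
    with B have "x \<in> \<Omega>" by blast
    have "(id a, id b) \<in> orbital G a b"
      using perm_group_on_id[OF pg] unfolding orbital_def by blast
    then have "{a, b} \<subseteq> ?C a" by auto
    moreover have "finite (?C a)"
      using finite_orbital_component[OF fin pg \<open>b \<in> \<Omega>\<close> \<open>a \<in> \<Omega>\<close>] .
    ultimately have "2 \<le> card (?C a)"
      using \<open>a \<noteq> b\<close> card_mono[of "?C a" "{a, b}"] by simp
    then have "card (?C x) \<noteq> 1"
      using card_orbital_component_eq[OF fin pg tr \<open>b \<in> \<Omega>\<close> \<open>a \<in> \<Omega>\<close> \<open>x \<in> \<Omega>\<close>] by simp
    moreover have "?C x \<noteq> \<Omega>"
      using orbital_component_subset_closed[OF closed \<open>x \<in> B\<close>] B by blast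
    moreover have "card (?C x) = 1 \<or> ?C x = \<Omega>"
      using primitive_on_block[OF pr orbital_component_is_block[OF fin pg tr \<open>b \<in> \<Omega>\<close> \<open>x \<in> \<Omega>\<close>]] .
    ultimately show False by blast
  qed
qed

theorem proposition2p2:
  fixes \<Omega> :: "'a set" and G :: "('a \<Rightarrow> 'a) set"
  assumes "finite \<Omega>" and "card \<Omega> \<ge> 2" and "perm_group_on \<Omega> G"
  shows "ordered_ut 2 \<Omega> G \<longleftrightarrow> primitive_on \<Omega> G"
proof -
  have "ordered_ut 2 \<Omega> G \<longleftrightarrow> separates_pairs \<Omega> G"
    using separates_pairs_if_ordered_ut_2 ordered_ut_2_if_separates_pairs[OF assms(3)] ..
  also have "\<dots> \<longleftrightarrow> primitive_on \<Omega> G"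
    using primitive_if_separates_pairs[OF assms(3,1,2)] separates_pairs_if_primitive[OF assms(1,3)] ..
  finally show ?thesis .
qed

end
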